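(* Let $\psi:\mathbb R^n\to\mathbb R$ be convex, $x_0\in\mathbb R^n$, $p_0\in\partial\psi(x_0)$, $t>0$, and let $\Omega\subset\mathbb R^n$. Suppose $S(x_0,p_0,t)$ is bounded with nonempty interior and there exists $\gamma\in(0,1)$ such that $$\gamma^{-1}S(x_0,p_0,t)\subset S(x_0,p_0,2t)\subset\Omega.$$ Then there exists $\theta>1$ depending only on $n$ and $\gamma$ such that for every $y\in S(x_0,p_0,t)$ and every $q\in\partial\psi(y)$ we have $S(x_0,p_0,t)\subset S(y,q,\theta t)$.
   Context: Sections: for $x_0\in\mathbb R^n$, $p_0\in\partial\psi(x_0)$, $t\ge0$, $S(x_0,p_0,t)=\{x\in\mathbb R^n:\psi(x)\le\psi(x_0)+p_0\cdot(x-x_0)+t\}$. For $\kappa>0$, $\kappa S(x_0,p_0,t)=\{x_0^*+\kappa(x-x_0^* ):x\in S(x_0,p_0,t)\}$ is the dilation with respect to the center of mass $x_0^*$ of $S(x_0,p_0,t)$. *)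

theory Defs
  imports "HOL-Analysis.Analysis"
begin

definition subdiff :: "('a::euclidean_space \<Rightarrow> real) \<Rightarrow> 'a \<Rightarrow> 'a set" where
  "subdiff \<psi> x = {p. \<forall>y. \<psi> y \<ge> \<psi> x + p \<bullet> (y - x)}"

definition sect :: "('a::euclidean_space \<Rightarrow> real) \<Rightarrow> 'a \<Rightarrow> 'a \<Rightarrow> real \<Rightarrow> 'a set" where
  "sect \<psi> x0 p0 t = {x. \<psi> x \<le> \<psi> x0 + p0 \<bullet> (x - x0) + t}"

definition centroid :: "'a::euclidean_space set \<Rightarrow> 'a" where
  "centroid A = (1 / measure lebesgue A) *\<^sub>R (\<integral>x\<in>A. x \<partial>lebesgue)"

definition dilate :: "real \<Rightarrow> 'a::euclidean_space set \<Rightarrow> 'a set" where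
  "dilate \<kappa> A = (\<lambda>x. centroid A + \<kappa> *\<^sub>R (x - centroid A)) ` A"

end

theory Submission
  imports Defs
begin

text \<open>Let \<open>K = S(x\<^sub>0, p\<^sub>0, t)\<close> with centroid \<open>c\<close> and put \<open>N = 2^(n+1)\<close>. Comparing integrals of
  linear functionals over \<open>K\<close> and over \<open>(K + x) / 2\<close> shows \<open>c - (x - c) / N \<in> K\<close> for every
  \<open>x \<in> K\<close>. For \<open>x, y \<in> K\<close> the point \<open>z = y + l (y - x)\<close>, \<open>l = (1 - \<gamma>) / (\<gamma> + N)\<close>, is a convex
  combination of \<open>c + (y - c) / \<gamma>\<close> and \<open>c - (x - c) / N\<close>, hence lies in \<open>S(x\<^sub>0, p\<^sub>0, 2t)\<close>.
  The supporting hyperplanes at \<open>y\<close> and \<open>x\<^sub>0\<close>, evaluated at \<open>z\<close>, give \<open>l (q - p\<^sub>0) \<bullet> (y - x) \<le> 2t\<close>,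
  which is \<open>x \<in> S(y, q, t + 2t / l)\<close>.\<close>

lemma convex_sect:
  assumes "convex_on UNIV \<psi>"
  shows "convex (sect \<psi> x0 p0 s)"
  unfolding convex_def sect_def
proof (intro allI impI ballI, clarify)
  fix u v :: 'a and a b :: real
  assume u: "\<psi> u \<le> \<psi> x0 + p0 \<bullet> (u - x0) + s" and v: "\<psi> v \<le> \<psi> x0 + p0 \<bullet> (v - x0) + s"
    and a: "0 \<le> a" and b: "0 \<le> b" and ab: "a + b = 1"
  have "\<psi> (a *\<^sub>R u + b *\<^sub>R v) \<le> a * \<psi> u + b * \<psi> v"
    using convex_onD[OF assms, of b u v] a b ab by (simp add: eq_diff_eq[symmetric])
  also have "\<dots> \<le> a * (\<psi> x0 + p0 \<bullet> (u - x0) + s) + b * (\<psi> x0 + p0 \<bullet> (v - x0) + s)"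
    using u v a b by (intro add_mono mult_left_mono) auto
  also have "\<dots> = \<psi> x0 + p0 \<bullet> (a *\<^sub>R u + b *\<^sub>R v - x0) + s"
    using ab by (simp add: inner_diff_right inner_add_right algebra_simps flip: distrib_right)
  finally show "\<psi> (a *\<^sub>R u + b *\<^sub>R v) \<le> \<psi> x0 + p0 \<bullet> (a *\<^sub>R u + b *\<^sub>R v - x0) + s" .
qed

lemma closed_sect:
  assumes "convex_on UNIV \<psi>"
  shows "closed (sect \<psi> x0 p0 s)"
  unfolding sect_def
  by (intro closed_Collect_le continuous_intros convex_on_continuous[OF open_UNIV assms])

lemma sect_mono:
  assumes "s \<le> s'"
  shows "sect \<psi> x0 p0 s \<subseteq> sect \<psi> x0 p0 s'"
  using assms unfolding sect_def by auto

lemma absolutely_integrable_on_compact_continuous: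
  fixes f :: "'a::euclidean_space \<Rightarrow> 'b::euclidean_space"
  assumes "compact K" "continuous_on K f"
  shows "f absolutely_integrable_on K"
  using borel_integrable_compact[OF assms] unfolding set_integrable_def
  by (simp add: integrable_completion borel_measurable_integrable)

lemma set_integral_inner_eq_measure_centroid:
  fixes K :: "'a::euclidean_space set"
  assumes "compact K" "measure lebesgue K > 0"
  shows "(LINT x:K|lebesgue. v \<bullet> x) = measure lebesgue K * (v \<bullet> centroid K)"
proof -
  have int: "(\<lambda>x. x) absolutely_integrable_on K"
    using absolutely_integrable_on_compact_continuous[OF assms(1) continuous_on_id] .
  have "(LINT x:K|lebesgue. v \<bullet> x) = (\<integral>x. v \<bullet> (indicator K x *\<^sub>R x) \<partial>lebesgue)"
    unfolding set_lebesgue_integral_def by (intro Bochner_Integration.integral_cong) auto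
  also have "\<dots> = v \<bullet> (LINT x:K|lebesgue. x)"
    unfolding set_lebesgue_integral_def
    using int unfolding set_integrable_def by (subst integral_inner_right) auto
  also have "\<dots> = measure lebesgue K * (v \<bullet> centroid K)"
    using assms(2) unfolding centroid_def by simp
  finally show ?thesis .
qed

text \<open>Integrate \<open>b + v \<bullet> (x - c)\<close>, which is nonnegative on \<open>K\<close> and has integral \<open>b |K|\<close> because
  \<open>c\<close> is the centroid, over the homothetic copy \<open>(K + w) / 2 \<subseteq> K\<close> of measure \<open>|K| / 2^n\<close>, on
  which it is at least \<open>(b + v \<bullet> (w - c)) / 2\<close>.\<close>

lemma inner_centroid_bound:
  fixes K :: "'a::euclidean_space set"
  assumes K: "compact K" "convex K" "measure lebesgue K > 0"
    and "w \<in> K" and bound: "\<And>x. x \<in> K \<Longrightarrow> v \<bullet> (centroid K - x) \<le> b"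
  shows "v \<bullet> (w - centroid K) \<le> (2 * 2 ^ DIM('a) - 1) * b"
proof -
  define c where "c = centroid K"
  define \<mu> where "\<mu> = measure lebesgue K"
  define P :: real where "P = 2 ^ DIM('a)"
  define h where "h = v \<bullet> (w - c)"
  define g where "g x = b + v \<bullet> (x - c)" for x
  define K' where "K' = (\<lambda>x. (1/2) *\<^sub>R x + (1/2) *\<^sub>R w) ` K"
  have g_nonneg: "g x \<ge> 0" if "x \<in> K" for x
    using bound[OF that] unfolding g_def c_def by (simp add: inner_diff_right)
  have "K' \<subseteq> K"
    using \<open>convex K\<close> \<open>w \<in> K\<close> unfolding K'_def convex_def by auto
  have "compact K'"
    unfolding K'_def by (intro compact_continuous_image K continuous_intros)
  then have K'_meas: "K' \<in> lmeasurable"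
    by (rule lmeasurable_compact)
  have measure_K': "measure lebesgue K' = \<mu> / P"
    unfolding K'_def \<mu>_def P_def using measure_lebesgue_affine[of "1/2" "(1/2) *\<^sub>R w" K]
    by (simp add: power_one_over)
  define C where "C = (b + h) / 2"
  have g_ge_C: "C * indicator K' x \<le> g x" if "x \<in> K" for x
  proof (cases "x \<in> K'")
    case True
    then obtain u where "u \<in> K" and x: "x = (1/2) *\<^sub>R u + (1/2) *\<^sub>R w"
      unfolding K'_def by blast
    have "g x = g u / 2 + C"
      unfolding g_def C_def h_def x by (simp add: inner_add_right inner_diff_right field_simps)
    then show ?thesis
      using g_nonneg[OF \<open>u \<in> K\<close>] True by simp
  qed (use g_nonneg[OF that] in simp)
  have ind_K': "(\<lambda>x. indicator K x *\<^sub>R (C * indicator K' x)) = (\<lambda>x. C * indicator K' x :: real)"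
    using \<open>K' \<subseteq> K\<close> by (auto simp: indicator_def fun_eq_iff)
  have "C * (\<mu> / P) = (LINT x:K|lebesgue. C * indicator K' x)"
    using K'_meas measure_K' unfolding set_lebesgue_integral_def ind_K' by simp
  also have "\<dots> \<le> (LINT x:K|lebesgue. g x)"
  proof (rule set_integral_mono[OF _ _ g_ge_C])
    show "set_integrable lebesgue K (\<lambda>x. C * indicator K' x)"
      using K'_meas unfolding set_integrable_def ind_K'
      by (intro integrable_mult_right integrable_real_indicator) (auto simp: fmeasurable_def)
    show "set_integrable lebesgue K g"
      unfolding g_def by (intro absolutely_integrable_on_compact_continuous K continuous_intros)
  qed
  also have "\<dots> = (LINT x:K|lebesgue. v \<bullet> x + (b - v \<bullet> c))"
    unfolding g_def by (simp add: inner_diff_right algebra_simps)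
  also have "\<dots> = \<mu> * (v \<bullet> c) + \<mu> * (b - v \<bullet> c)"
    using lmeasurable_compact[OF \<open>compact K\<close>]
    by (subst set_integral_add(2))
      (auto intro!: absolutely_integrable_on_compact_continuous K continuous_intros
        simp: set_integral_inner_eq_measure_centroid[OF \<open>compact K\<close> \<open>measure lebesgue K > 0\<close>]
          set_integral_const fmeasurable_def right_diff_distrib \<mu>_def c_def)
  also have "\<dots> = b * \<mu>"
    by (simp add: algebra_simps)
  finally have "C / P * \<mu> \<le> b * \<mu>"
    by simp
  then have "C / P \<le> b"
    using \<open>measure lebesgue K > 0\<close> unfolding \<mu>_def by (rule mult_right_le_imp_le)
  then show ?thesis
    unfolding C_def h_def c_def P_def by (simp add: field_simps)
qed

lemma centroid_reflection_mem:
  fixes K :: "'a::euclidean_space set"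
  assumes K: "compact K" "convex K" "measure lebesgue K > 0" and "w \<in> K"
  shows "centroid K - (1 / (2 * 2 ^ DIM('a))) *\<^sub>R (w - centroid K) \<in> K"
proof (rule ccontr)
  define c where "c = centroid K"
  define N :: real where "N = 2 * 2 ^ DIM('a)"
  have "N > 0"
    unfolding N_def by simp
  assume "centroid K - (1 / (2 * 2 ^ DIM('a))) *\<^sub>R (w - centroid K) \<notin> K"
  then obtain v b where sep_p: "v \<bullet> (c - (1 / N) *\<^sub>R (w - c)) < b" and sep_K: "\<forall>x\<in>K. v \<bullet> x > b"
    using separating_hyperplane_closed_point[OF \<open>convex K\<close> compact_imp_closed[OF \<open>compact K\<close>]]
    unfolding c_def N_def by blast
  define \<beta> where "\<beta> = v \<bullet> c - b"
  have bound: "v \<bullet> (c - x) \<le> \<beta>" if "x \<in> K" for x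
    using sep_K that unfolding \<beta>_def by (force simp: inner_diff_right)
  have upper: "v \<bullet> (w - c) \<le> (N - 1) * \<beta>"
    using inner_centroid_bound[OF K \<open>w \<in> K\<close>, of v \<beta>] bound unfolding c_def N_def by simp
  have "v \<bullet> c - v \<bullet> (w - c) / N < b"
    using sep_p by (simp add: inner_diff_right)
  then have lower: "v \<bullet> (w - c) > N * \<beta>"
    using \<open>N > 0\<close> unfolding \<beta>_def by (simp add: field_simps)
  have "- \<beta> \<le> v \<bullet> (w - c)"
    using bound[OF \<open>w \<in> K\<close>] by (simp add: inner_diff_right)
  then have "0 \<le> N * \<beta>"
    using upper by (simp add: algebra_simps)
  then have "\<beta> \<ge> 0"
    using \<open>N > 0\<close> by (simp add: zero_le_mult_iff)
  with upper lower show False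
    by (simp add: algebra_simps)
qed

lemma extension_mem_of_dilate_subset:
  fixes K L :: "'a::euclidean_space set"
  assumes K: "compact K" "convex K" "measure lebesgue K > 0"
    and "convex L" "K \<subseteq> L" "dilate (1 / \<gamma>) K \<subseteq> L" "0 < \<gamma>" "\<gamma> < 1"
    and "x \<in> K" "y \<in> K"
  shows "y + ((1 - \<gamma>) / (\<gamma> + 2 * 2 ^ DIM('a))) *\<^sub>R (y - x) \<in> L"
proof -
  define c where "c = centroid K"
  define N :: real where "N = 2 * 2 ^ DIM('a)"
  define l where "l = (1 - \<gamma>) / (\<gamma> + N)"
  have "N > 0" "l > 0"
    using \<open>0 < \<gamma>\<close> \<open>\<gamma> < 1\<close> unfolding N_def l_def by (simp_all add: add_pos_pos)
  have "(\<gamma> + N) * l = 1 - \<gamma>"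
    using \<open>0 < \<gamma>\<close> \<open>N > 0\<close> unfolding l_def by simp
  then have weights: "\<gamma> * (1 + l) + N * l = 1"
    by (simp add: algebra_simps)
  have dilated: "c + (1 / \<gamma>) *\<^sub>R (y - c) \<in> L"
    using \<open>dilate (1 / \<gamma>) K \<subseteq> L\<close> \<open>y \<in> K\<close> unfolding dilate_def c_def by auto
  have reflected: "c - (1 / N) *\<^sub>R (x - c) \<in> L"
    using centroid_reflection_mem[OF K \<open>x \<in> K\<close>] \<open>K \<subseteq> L\<close> unfolding c_def N_def by auto
  have "(\<gamma> * (1 + l)) *\<^sub>R (c + (1 / \<gamma>) *\<^sub>R (y - c)) + (N * l) *\<^sub>R (c - (1 / N) *\<^sub>R (x - c)) \<in> L"
    using \<open>convex L\<close> dilated reflected weights \<open>0 < \<gamma>\<close> \<open>l > 0\<close> \<open>N > 0\<close>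
    unfolding convex_def by simp
  also have "(\<gamma> * (1 + l)) *\<^sub>R (c + (1 / \<gamma>) *\<^sub>R (y - c)) + (N * l) *\<^sub>R (c - (1 / N) *\<^sub>R (x - c))
      = (\<gamma> * (1 + l) + N * l) *\<^sub>R c + (1 + l) *\<^sub>R (y - c) - l *\<^sub>R (x - c)"
    using \<open>0 < \<gamma>\<close> \<open>N > 0\<close> by (simp add: algebra_simps)
  also have "\<dots> = y + l *\<^sub>R (y - x)"
    using weights by (simp add: algebra_simps)
  finally show ?thesis
    unfolding l_def N_def .
qed

lemma mem_sect_of_extension_mem_sect:
  assumes "p0 \<in> subdiff \<psi> x0" "q \<in> subdiff \<psi> y" "l > 0"
    and "x \<in> sect \<psi> x0 p0 s" "y + l *\<^sub>R (y - x) \<in> sect \<psi> x0 p0 s'"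
  shows "x \<in> sect \<psi> y q (s + s' / l)"
proof -
  define z where "z = y + l *\<^sub>R (y - x)"
  have y: "\<psi> y \<ge> \<psi> x0 + p0 \<bullet> (y - x0)"
    using assms(1) unfolding subdiff_def by simp
  have "\<psi> y + q \<bullet> (z - y) \<le> \<psi> z"
    using assms(2) unfolding subdiff_def by simp
  then have z: "\<psi> y + l * (q \<bullet> (y - x)) \<le> \<psi> z"
    unfolding z_def by simp
  have "\<psi> z \<le> \<psi> x0 + p0 \<bullet> (y - x0) + l * (p0 \<bullet> (y - x)) + s'"
    using assms(5) unfolding sect_def z_def by (simp add: inner_add_right inner_diff_right)
  then have "l * ((q - p0) \<bullet> (y - x)) \<le> s'"
    using y z by (simp add: inner_diff_left algebra_simps)
  then have "(q - p0) \<bullet> (y - x) \<le> s' / l"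
    using \<open>l > 0\<close> by (simp add: field_simps)
  then show ?thesis
    using assms(4) y unfolding sect_def by (simp add: inner_diff_left inner_diff_right)
qed

lemma measure_pos_of_convex_compact:
  fixes K :: "'a::euclidean_space set"
  assumes "compact K" "convex K" "interior K \<noteq> {}"
  shows "measure lebesgue K > 0"
proof -
  have "\<not> negligible K"
    using negligible_convex_interior[OF \<open>convex K\<close>] \<open>interior K \<noteq> {}\<close> by simp
  then show ?thesis
    using negligible_iff_measure0[OF lmeasurable_compact[OF \<open>compact K\<close>]]
      measure_nonneg[of lebesgue K] by linarith
qed

theorem mainTheorem9:
  fixes \<gamma> :: real
  assumes "0 < \<gamma>" "\<gamma> < 1"
  shows "\<exists>\<theta>>1. \<forall>(\<psi>::'a::euclidean_space \<Rightarrow> real) x0 p0 t (\<Omega>::'a set).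
           convex_on UNIV \<psi> \<and> p0 \<in> subdiff \<psi> x0 \<and> t > 0 \<and>
           bounded (sect \<psi> x0 p0 t) \<and> interior (sect \<psi> x0 p0 t) \<noteq> {} \<and>
           dilate (1 / \<gamma>) (sect \<psi> x0 p0 t) \<subseteq> sect \<psi> x0 p0 (2 * t) \<and>
           sect \<psi> x0 p0 (2 * t) \<subseteq> \<Omega>
           \<longrightarrow> (\<forall>y \<in> sect \<psi> x0 p0 t. \<forall>q \<in> subdiff \<psi> y.
                  sect \<psi> x0 p0 t \<subseteq> sect \<psi> y q (\<theta> * t))"
proof -
  define l where "l = (1 - \<gamma>) / (\<gamma> + 2 * 2 ^ DIM('a))"
  have "l > 0"
    using assms unfolding l_def by (simp add: add_pos_pos)
  show ?thesis
  proof (intro exI[of _ "1 + 2 / l"] conjI allI impI ballI subsetI)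
    show "1 + 2 / l > 1"
      using \<open>l > 0\<close> by simp
    fix \<psi> :: "'a \<Rightarrow> real" and x0 p0 t and \<Omega> :: "'a set" and y q x
    assume H: "convex_on UNIV \<psi> \<and> p0 \<in> subdiff \<psi> x0 \<and> t > 0 \<and>
           bounded (sect \<psi> x0 p0 t) \<and> interior (sect \<psi> x0 p0 t) \<noteq> {} \<and>
           dilate (1 / \<gamma>) (sect \<psi> x0 p0 t) \<subseteq> sect \<psi> x0 p0 (2 * t) \<and>
           sect \<psi> x0 p0 (2 * t) \<subseteq> \<Omega>"
      and y: "y \<in> sect \<psi> x0 p0 t" and q: "q \<in> subdiff \<psi> y" and x: "x \<in> sect \<psi> x0 p0 t"
    have cvx: "convex_on UNIV \<psi>" and p0: "p0 \<in> subdiff \<psi> x0" and "t > 0"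
      and interior: "interior (sect \<psi> x0 p0 t) \<noteq> {}"
      and dilate: "dilate (1 / \<gamma>) (sect \<psi> x0 p0 t) \<subseteq> sect \<psi> x0 p0 (2 * t)"
      using H by auto
    have K: "compact (sect \<psi> x0 p0 t)" "convex (sect \<psi> x0 p0 t)"
      using H closed_sect[OF cvx] convex_sect[OF cvx] by (auto simp: compact_eq_bounded_closed)
    have "y + l *\<^sub>R (y - x) \<in> sect \<psi> x0 p0 (2 * t)"
      unfolding l_def
      using extension_mem_of_dilate_subset[OF K measure_pos_of_convex_compact[OF K interior]
          convex_sect[OF cvx] sect_mono dilate assms x y] \<open>t > 0\<close> by simp
    then have "x \<in> sect \<psi> y q (t + 2 * t / l)"
      by (rule mem_sect_of_extension_mem_sect[OF p0 q \<open>l > 0\<close> x])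
    then show "x \<in> sect \<psi> y q ((1 + 2 / l) * t)"
      by (simp add: algebra_simps)
  qed
qed

end
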